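(* If $M$ is a probabilistic epistemic structure over $\Phi$ and $M_c$ is the corresponding common-interpretation structure over $\Phi\times N$, then for every formula $\varphi$, state $\omega$ and player $i$: (a) $(M,\omega,i)\models^{\mathit{in}}\varphi$ iff $(M_c,\omega)\models\varphi_i^{\mathit{in}}$; (b) $(M,\omega,i)\models^{\mathit{out}}\varphi$ iff $(M_c,\omega)\models\varphi_i^{\mathit{out}}$.
   Context: Setting: $N=\{1,\dots,n\}$ players; formulas are built from primitive propositions by negation, conjunction, operators $CB_G$ ($G\subseteq N$ nonempty) and probability formulas $a_1\Pr_j(\varphi_1)+\dots+a_k\Pr_j(\varphi_k)\ge b$ ($a_l,b\in\mathbb{Q}$); $B_j\varphi$ abbreviates $\Pr_j(\varphi)=1$, $EB^1_G\varphi=\bigwedge_{j\in G}B_j\varphi$, $EB^{m+1}_G\varphi=EB^m_GEB^1_G\varphi$. An epistemic probability structure $M=(\Omega,(\Pi_j)_{j\in N},(\mathcal{P}_j)_{j\in N},(\pi_j)_{j\in N})$ over $\Phi$ has partitions $\Pi_i$ of $\Omega$, probability spaces $\mathcal{P}_i(\omega)=(\Omega_{i,\omega},\mathcal{F}_{i,\omega},\mu_{i,\omega})$, and player-specific truth assignments $\pi_i(\omega)$ to $\Phi$, satisfying: $\Omega_{i,\omega}=\Pi_i(\omega)$; $\mathcal{P}_i$ constant on cells of $\Pi_i$; $\Pi_i(\omega)\cap\Pi_j(\omega')\in\mathcal{F}_{i,\omega}$; and $\Pi_i(\omega)\cap[[p]]_i\in\mathcal{F}_{i,\omega}$. Outermost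 scope: $(M,\omega,i)\models^{\mathit{out}}p$ iff $\pi_i(\omega)(p)=\mathbf{true}$; negation/conjunction as usual; $(M,\omega,i)\models^{\mathit{out}}\sum_la_l\Pr_j(\varphi_l)\ge b$ iff $\sum_la_l\mu_{j,\omega}([[\varphi_l]]^{\mathit{out}}_i\cap\Omega_{j,\omega})\ge b$ with $[[\psi]]^{\mathit{out}}_i=\{\omega:(M,\omega,i)\models^{\mathit{out}}\psi\}$; $CB_G\varphi$ holds iff $EB^k_G\varphi$ holds for all $k\ge1$. Innermost scope $\models^{\mathit{in}}$ is the same except that probability formulas about $j$ use $[[\varphi_l]]^{\mathit{in}}_j$. The corresponding common-interpretation structure is $M_c=(\Omega,(\Pi_j),(\mathcal{P}_j),\pi)$ over primitive propositions $\Phi\times N$, with $\pi(\omega)((p,i))=\pi_i(\omega)(p)$; truth in $M_c$ is agent-independent: $(M_c,\omega)\models(p,i)$ iff $\pi(\omega)((p,i))=\mathbf{true}$, and $(M_c,\omega)\models\sum_la_l\Pr_j(\varphi_l)\ge b$ iff $\sum_la_l\mu_{j,\omega}([[\varphi_l]]\cap\Omega_{j,\omega})\ge b$. Translations, defined by induction: $p_i^{\mathit{in}}=(p,i)$; $(\neg\psi)_i^{\mathit{in}}=\neg\psi_i^{\mathit{in}}$; $(\psi\wedge\psi')_i^{\mathit{in}}=\psi_i^{\mathit{in}}\wedge\psi'^{\mathit{in}}_i$; $(\sum_la_l\Pr_j(\varphi_l)\ge b)_i^{\mathit{in}}=\sum_la_l\Pr_j((\varphi_l)_j^{\mathit{in}})\ge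 b$; $(CB_G\psi)_i^{\mathit{in}}=CB_G(\bigwedge_{j\in G}B_j\psi_j^{\mathit{in}})$. Similarly $p_i^{\mathit{out}}=(p,i)$; negation and conjunction componentwise; $(\sum_la_l\Pr_j(\varphi_l)\ge b)_i^{\mathit{out}}=\sum_la_l\Pr_j((\varphi_l)_i^{\mathit{out}})\ge b$; $(CB_G\psi)_i^{\mathit{out}}=CB_G(\psi_i^{\mathit{out}})$. *)

theory Defs
  imports "HOL-Probability.Probability"
begin

text \<open>Players form a finite linearly ordered type 'ag (playing the role of N = {1..n});
 primitive propositions have type 'p.  Lin j [(a1,phi1),...,(ak,phik)] b stands for
 a1 Pr_j(phi1) + ... + ak Pr_j(phik) >= b.\<close>

datatype ('p, 'ag) fm =
    Atom 'p
  | Neg "('p, 'ag) fm"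
  | Conj "('p, 'ag) fm" "('p, 'ag) fm"
  | Lin 'ag "(rat \<times> ('p, 'ag) fm) list" rat
  | CB "'ag set" "('p, 'ag) fm"

fun wf_fm :: "('p, 'ag) fm \<Rightarrow> bool" where
  "wf_fm (Atom p) = True"
| "wf_fm (Neg \<phi>) = wf_fm \<phi>"
| "wf_fm (Conj \<phi> \<psi>) = (wf_fm \<phi> \<and> wf_fm \<psi>)"
| "wf_fm (Lin j l b) = (l \<noteq> [] \<and> (\<forall>(a, \<psi>) \<in> set l. wf_fm \<psi>))"
| "wf_fm (CB G \<phi>) = (G \<noteq> {} \<and> wf_fm \<phi>)"

text \<open>B_j phi abbreviates Pr_j(phi) = 1, i.e. Pr_j(phi) >= 1 and -Pr_j(phi) >= -1.\<close>
definition Bel :: "'ag \<Rightarrow> ('p, 'ag) fm \<Rightarrow> ('p, 'ag) fm" where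
  "Bel j \<phi> = Conj (Lin j [(1, \<phi>)] 1) (Lin j [(-1, \<phi>)] (-1))"

fun bigconj :: "('p, 'ag) fm list \<Rightarrow> ('p, 'ag) fm" where
  "bigconj [x] = x"
| "bigconj (x # y # xs) = Conj x (bigconj (y # xs))"

record ('w, 'ag, 'p) eps =
  Omega :: "'w set"
  Part  :: "'ag \<Rightarrow> 'w \<Rightarrow> 'w set"      \<comment> \<open>Pi_i(omega): the cell of Pi_i containing omega\<close>
  Prb   :: "'ag \<Rightarrow> 'w \<Rightarrow> 'w measure"
  Val   :: "'ag \<Rightarrow> 'w \<Rightarrow> 'p \<Rightarrow> bool"

definition epistemic_prob_structure :: "('w, 'ag, 'p) eps \<Rightarrow> bool" where
  "epistemic_prob_structure M \<longleftrightarrow>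
     (\<forall>i. \<forall>\<omega>\<in>Omega M. \<omega> \<in> Part M i \<omega> \<and> Part M i \<omega> \<subseteq> Omega M \<and>
          (\<forall>\<omega>'\<in>Omega M. Part M i \<omega> = Part M i \<omega>' \<or> Part M i \<omega> \<inter> Part M i \<omega>' = {})) \<and>
     (\<forall>i. \<forall>\<omega>\<in>Omega M. prob_space (Prb M i \<omega>) \<and> space (Prb M i \<omega>) = Part M i \<omega>) \<and>
     (\<forall>i. \<forall>\<omega>\<in>Omega M. \<forall>\<omega>'\<in>Part M i \<omega>. Prb M i \<omega>' = Prb M i \<omega>) \<and>
     (\<forall>i j. \<forall>\<omega>\<in>Omega M. \<forall>\<omega>'\<in>Omega M. Part M i \<omega> \<inter> Part M j \<omega>' \<in> sets (Prb M i \<omega>)) \<and>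
     (\<forall>i p. \<forall>\<omega>\<in>Omega M. Part M i \<omega> \<inter> {\<omega>'\<in>Omega M. Val M i \<omega>' p} \<in> sets (Prb M i \<omega>))"

record ('w, 'ag, 'q) cis =
  COmega :: "'w set"
  CPart  :: "'ag \<Rightarrow> 'w \<Rightarrow> 'w set"
  CPrb   :: "'ag \<Rightarrow> 'w \<Rightarrow> 'w measure"
  CVal   :: "'w \<Rightarrow> 'q \<Rightarrow> bool"

definition corr :: "('w, 'ag, 'p) eps \<Rightarrow> ('w, 'ag, 'p \<times> 'ag) cis" where
  "corr M = \<lparr> COmega = Omega M, CPart = Part M, CPrb = Prb M,
              CVal = (\<lambda>\<omega> (p, i). Val M i \<omega> p) \<rparr>"

text \<open>Semantic unfolding of EB^1_G: the set of states at which every j in G assigns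
 probability 1 to the given set (for the in-scope semantics, to the set for player j).
 Since EB^(m+1) = EB^m EB^1, the extension of EB^k is the k-fold iterate.\<close>

definition eb1 :: "('w \<Rightarrow> 'ag \<Rightarrow> 'w measure) \<Rightarrow> 'ag set \<Rightarrow> 'w set \<Rightarrow> 'w set" where
  "eb1 P G S = {\<omega>. \<forall>j\<in>G. measure (P \<omega> j) (S \<inter> space (P \<omega> j)) = 1}"

definition eb1_in :: "('w, 'ag, 'p) eps \<Rightarrow> 'ag set \<Rightarrow> ('ag \<Rightarrow> 'w set) \<Rightarrow> ('ag \<Rightarrow> 'w set)" where
  "eb1_in M G F = (\<lambda>i. {\<omega>. \<forall>j\<in>G. measure (Prb M j \<omega>) (F j \<inter> space (Prb M j \<omega>)) = 1})"

fun ext_out :: "('w, 'ag, 'p) eps \<Rightarrow> 'ag \<Rightarrow> ('p, 'ag) fm \<Rightarrow> 'w set" where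
  "ext_out M i (Atom p) = {\<omega>. Val M i \<omega> p}"
| "ext_out M i (Neg \<phi>) = - ext_out M i \<phi>"
| "ext_out M i (Conj \<phi> \<psi>) = ext_out M i \<phi> \<inter> ext_out M i \<psi>"
| "ext_out M i (Lin j l b) =
     {\<omega>. (\<Sum>(a, \<psi>)\<leftarrow>l. real_of_rat a * measure (Prb M j \<omega>) (ext_out M i \<psi> \<inter> space (Prb M j \<omega>)))
           \<ge> real_of_rat b}"
| "ext_out M i (CB G \<phi>) =
     {\<omega>. \<forall>k\<ge>1. \<omega> \<in> (eb1 (\<lambda>\<omega> j. Prb M j \<omega>) G ^^ k) (ext_out M i \<phi>)}"

fun ext_in :: "('w, 'ag, 'p) eps \<Rightarrow> 'ag \<Rightarrow> ('p, 'ag) fm \<Rightarrow> 'w set" where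
  "ext_in M i (Atom p) = {\<omega>. Val M i \<omega> p}"
| "ext_in M i (Neg \<phi>) = - ext_in M i \<phi>"
| "ext_in M i (Conj \<phi> \<psi>) = ext_in M i \<phi> \<inter> ext_in M i \<psi>"
| "ext_in M i (Lin j l b) =
     {\<omega>. (\<Sum>(a, \<psi>)\<leftarrow>l. real_of_rat a * measure (Prb M j \<omega>) (ext_in M j \<psi> \<inter> space (Prb M j \<omega>)))
           \<ge> real_of_rat b}"
| "ext_in M i (CB G \<phi>) =
     {\<omega>. \<forall>k\<ge>1. \<omega> \<in> (eb1_in M G ^^ k) (\<lambda>j. ext_in M j \<phi>) i}"

fun ext_c :: "('w, 'ag, 'q) cis \<Rightarrow> ('q, 'ag) fm \<Rightarrow> 'w set" where
  "ext_c Mc (Atom q) = {\<omega>. CVal Mc \<omega> q}"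
| "ext_c Mc (Neg \<phi>) = - ext_c Mc \<phi>"
| "ext_c Mc (Conj \<phi> \<psi>) = ext_c Mc \<phi> \<inter> ext_c Mc \<psi>"
| "ext_c Mc (Lin j l b) =
     {\<omega>. (\<Sum>(a, \<psi>)\<leftarrow>l. real_of_rat a * measure (CPrb Mc j \<omega>) (ext_c Mc \<psi> \<inter> space (CPrb Mc j \<omega>)))
           \<ge> real_of_rat b}"
| "ext_c Mc (CB G \<phi>) =
     {\<omega>. \<forall>k\<ge>1. \<omega> \<in> (eb1 (\<lambda>\<omega> j. CPrb Mc j \<omega>) G ^^ k) (ext_c Mc \<phi>)}"

definition sat_out :: "('w, 'ag, 'p) eps \<Rightarrow> 'w \<Rightarrow> 'ag \<Rightarrow> ('p, 'ag) fm \<Rightarrow> bool" where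
  "sat_out M \<omega> i \<phi> \<longleftrightarrow> \<omega> \<in> ext_out M i \<phi>"

definition sat_in :: "('w, 'ag, 'p) eps \<Rightarrow> 'w \<Rightarrow> 'ag \<Rightarrow> ('p, 'ag) fm \<Rightarrow> bool" where
  "sat_in M \<omega> i \<phi> \<longleftrightarrow> \<omega> \<in> ext_in M i \<phi>"

definition sat_c :: "('w, 'ag, 'q) cis \<Rightarrow> 'w \<Rightarrow> ('q, 'ag) fm \<Rightarrow> bool" where
  "sat_c Mc \<omega> \<phi> \<longleftrightarrow> \<omega> \<in> ext_c Mc \<phi>"

fun tr_in :: "'ag::{finite,linorder} \<Rightarrow> ('p, 'ag) fm \<Rightarrow> ('p \<times> 'ag, 'ag) fm" where
  "tr_in i (Atom p) = Atom (p, i)"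
| "tr_in i (Neg \<psi>) = Neg (tr_in i \<psi>)"
| "tr_in i (Conj \<psi> \<psi>') = Conj (tr_in i \<psi>) (tr_in i \<psi>')"
| "tr_in i (Lin j l b) = Lin j (map (\<lambda>(a, \<psi>). (a, tr_in j \<psi>)) l) b"
| "tr_in i (CB G \<psi>) = CB G (bigconj (map (\<lambda>j. Bel j (tr_in j \<psi>)) (sorted_list_of_set G)))"

fun tr_out :: "'ag \<Rightarrow> ('p, 'ag) fm \<Rightarrow> ('p \<times> 'ag, 'ag) fm" where
  "tr_out i (Atom p) = Atom (p, i)"
| "tr_out i (Neg \<psi>) = Neg (tr_out i \<psi>)"
| "tr_out i (Conj \<psi> \<psi>') = Conj (tr_out i \<psi>) (tr_out i \<psi>')"
| "tr_out i (Lin j l b) = Lin j (map (\<lambda>(a, \<psi>). (a, tr_out i \<psi>)) l) b"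
| "tr_out i (CB G \<psi>) = CB G (tr_out i \<psi>)"

end

theory Submission
  imports Defs
begin

text \<open>The outermost-scope translation only renames primitive propositions, so (b) holds
 extensionally by structural induction.  For the innermost scope, translated formulas
 agree with the original ones on the state space; the only nontrivial case is CB_G.
 There CB_G \<psi> holds in the innermost scope iff EB^k_G E holds for every k \<ge> 0, where
 E is the conjunction over j \<in> G of B_j \<psi>_j, whereas the translation CB_G E only asks
 for k \<ge> 1.
 The gap k = 0 is closed by positive introspection: each P_j is constant on the
 cells of \<Pi>_j, so believing E with probability 1 entails E.\<close>

abbreviation EB :: "('w, 'ag, 'p) eps \<Rightarrow> 'ag set \<Rightarrow> 'w set \<Rightarrow> 'w set" where
  "EB M G \<equiv> eb1 (\<lambda>\<omega> j. Prb M j \<omega>) G"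

lemma ext_out_eq_ext_c_tr_out: "ext_out M i \<phi> = ext_c (corr M) (tr_out i \<phi>)"
proof (induction \<phi> arbitrary: i)
  case (Lin j l b)
  then have "(\<Sum>(a, \<psi>)\<leftarrow>l. real_of_rat a * measure (Prb M j \<omega>) (ext_out M i \<psi> \<inter> space (Prb M j \<omega>)))
      = (\<Sum>(a, \<psi>)\<leftarrow>map (\<lambda>(a, \<psi>). (a, tr_out i \<psi>)) l.
           real_of_rat a * measure (Prb M j \<omega>) (ext_c (corr M) \<psi> \<inter> space (Prb M j \<omega>)))" for \<omega>
    unfolding map_map by (intro arg_cong[where f=sum_list] map_cong) auto
  then show ?case by (simp add: corr_def)
qed (auto simp: corr_def)

lemma space_Prb_subset_Omega:
  assumes "epistemic_prob_structure M" "\<omega> \<in> Omega M"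
  shows "space (Prb M j \<omega>) \<subseteq> Omega M"
  using assms unfolding epistemic_prob_structure_def by blast

lemma Prb_eq_on_space:
  assumes "epistemic_prob_structure M" "\<omega> \<in> Omega M" "\<omega>' \<in> space (Prb M j \<omega>)"
  shows "Prb M j \<omega>' = Prb M j \<omega>"
  using assms unfolding epistemic_prob_structure_def by blast

lemma inter_space_Prb_cong:
  assumes "epistemic_prob_structure M" "\<omega> \<in> Omega M" "A \<inter> Omega M = B \<inter> Omega M"
  shows "A \<inter> space (Prb M j \<omega>) = B \<inter> space (Prb M j \<omega>)"
  using space_Prb_subset_Omega[OF assms(1,2)] assms(3) by blast

lemma eb1_inter_cong:
  assumes "\<And>\<omega> j. \<omega> \<in> \<Omega> \<Longrightarrow> space (P \<omega> j) \<subseteq> \<Omega>" and "A \<inter> \<Omega> = B \<inter> \<Omega>"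
  shows "eb1 P G A \<inter> \<Omega> = eb1 P G B \<inter> \<Omega>"
proof -
  have "A \<inter> space (P \<omega> j) = B \<inter> space (P \<omega> j)" if "\<omega> \<in> \<Omega>" for \<omega> j
    using assms that by blast
  then show ?thesis unfolding eb1_def by auto
qed

lemma eb1_funpow_inter_cong:
  assumes "\<And>\<omega> j. \<omega> \<in> \<Omega> \<Longrightarrow> space (P \<omega> j) \<subseteq> \<Omega>" and "A \<inter> \<Omega> = B \<inter> \<Omega>"
  shows "(eb1 P G ^^ k) A \<inter> \<Omega> = (eb1 P G ^^ k) B \<inter> \<Omega>"
proof (induction k)
  case (Suc k)
  then show ?case using eb1_inter_cong[OF assms(1)] by simp
qed (use assms(2) in simp)

lemma eb1_in_funpow_Suc:
  "(eb1_in M G ^^ Suc k) F i = (EB M G ^^ k) (eb1_in M G F i)"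
proof (induction k arbitrary: i)
  case (Suc k)
  then show ?case by (simp add: eb1_in_def eb1_def)
qed simp

lemma all_ge_1_iff_all_Suc: "(\<forall>k\<ge>1. P k) \<longleftrightarrow> (\<forall>k. P (Suc k))"
  by (metis One_nat_def Suc_le_D Suc_le_mono zero_le)

lemma EB_eb1_in_subset:
  assumes M: "epistemic_prob_structure M" and \<omega>: "\<omega> \<in> Omega M"
    and belief: "\<omega> \<in> EB M G (eb1_in M G F i)"
  shows "\<omega> \<in> eb1_in M G F i"
proof -
  have "measure (Prb M j \<omega>) (F j \<inter> space (Prb M j \<omega>)) = 1" if j: "j \<in> G" for j
  proof -
    have "measure (Prb M j \<omega>) (eb1_in M G F i \<inter> space (Prb M j \<omega>)) = 1"
      using belief j by (simp add: eb1_def)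
    then obtain \<omega>' where \<omega>': "\<omega>' \<in> eb1_in M G F i" "\<omega>' \<in> space (Prb M j \<omega>)"
      by (metis disjoint_iff measure_empty zero_neq_one)
    have "measure (Prb M j \<omega>') (F j \<inter> space (Prb M j \<omega>')) = 1"
      using \<omega>'(1) j by (simp add: eb1_in_def)
    then show ?thesis using Prb_eq_on_space[OF M \<omega> \<omega>'(2)] by simp
  qed
  then show ?thesis by (simp add: eb1_in_def)
qed

lemma ext_in_CB_iff:
  fixes G \<psi> i
  assumes M: "epistemic_prob_structure M" and \<omega>: "\<omega> \<in> Omega M"
  defines "E \<equiv> eb1_in M G (\<lambda>j. ext_in M j \<psi>) i"
  shows "\<omega> \<in> ext_in M i (CB G \<psi>) \<longleftrightarrow> (\<forall>k\<ge>1. \<omega> \<in> (EB M G ^^ k) E)"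
proof -
  have "\<omega> \<in> ext_in M i (CB G \<psi>) \<longleftrightarrow> (\<forall>k. \<omega> \<in> (eb1_in M G ^^ Suc k) (\<lambda>j. ext_in M j \<psi>) i)"
    by (simp only: ext_in.simps mem_Collect_eq all_ge_1_iff_all_Suc)
  also have "\<dots> \<longleftrightarrow> (\<forall>k. \<omega> \<in> (EB M G ^^ k) E)"
    by (simp only: eb1_in_funpow_Suc E_def)
  also have "\<dots> \<longleftrightarrow> (\<forall>k. \<omega> \<in> (EB M G ^^ Suc k) E)"
  proof
    assume "\<forall>k. \<omega> \<in> (EB M G ^^ Suc k) E"
    moreover have "\<omega> \<in> E" if "\<omega> \<in> (EB M G ^^ Suc 0) E"
      using EB_eb1_in_subset[OF M \<omega>] that unfolding E_def by simp
    ultimately show "\<forall>k. \<omega> \<in> (EB M G ^^ k) E"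
      by (metis funpow_0 not0_implies_Suc)
  qed blast
  also have "\<dots> \<longleftrightarrow> (\<forall>k\<ge>1. \<omega> \<in> (EB M G ^^ k) E)"
    by (simp only: all_ge_1_iff_all_Suc)
  finally show ?thesis .
qed

lemma ext_c_bigconj:
  "xs \<noteq> [] \<Longrightarrow> ext_c Mc (bigconj xs) = (\<Inter>x\<in>set xs. ext_c Mc x)"
  by (induction xs rule: bigconj.induct) auto

lemma ext_c_Bel:
  "ext_c Mc (Bel j \<phi>) = {\<omega>. measure (CPrb Mc j \<omega>) (ext_c Mc \<phi> \<inter> space (CPrb Mc j \<omega>)) = 1}"
  by (auto simp: Bel_def)

lemma ext_in_inter_Omega_eq_ext_c_tr_in:
  assumes M: "epistemic_prob_structure M"
  shows "wf_fm \<phi> \<Longrightarrow> ext_in M i \<phi> \<inter> Omega M = ext_c (corr M) (tr_in i \<phi>) \<inter> Omega M"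
proof (induction \<phi> arbitrary: i)
  case (Lin j l b)
  have IH: "ext_in M j \<psi> \<inter> Omega M = ext_c (corr M) (tr_in j \<psi>) \<inter> Omega M"
    if "(a, \<psi>) \<in> set l" for a \<psi>
    using Lin.prems that by (intro Lin.IH[OF that]) auto
  have "(\<Sum>(a, \<psi>)\<leftarrow>l. real_of_rat a * measure (Prb M j \<omega>) (ext_in M j \<psi> \<inter> space (Prb M j \<omega>)))
      = (\<Sum>(a, \<psi>)\<leftarrow>map (\<lambda>(a, \<psi>). (a, tr_in j \<psi>)) l.
           real_of_rat a * measure (Prb M j \<omega>) (ext_c (corr M) \<psi> \<inter> space (Prb M j \<omega>)))"
    if "\<omega> \<in> Omega M" for \<omega>
    unfolding map_map
    by (intro arg_cong[where f=sum_list] map_cong)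
       (auto simp: inter_space_Prb_cong[OF M that IH])
  then show ?case by (auto simp: corr_def)
next
  case (CB G \<psi>)
  let ?E\<^sub>c = "bigconj (map (\<lambda>j. Bel j (tr_in j \<psi>)) (sorted_list_of_set G))"
  define E where "E = eb1_in M G (\<lambda>j. ext_in M j \<psi>) i"
  have "G \<noteq> {}" and IH: "\<And>j. ext_in M j \<psi> \<inter> Omega M = ext_c (corr M) (tr_in j \<psi>) \<inter> Omega M"
    using CB by auto
  then have "ext_c (corr M) ?E\<^sub>c
      = {\<omega>. \<forall>j\<in>G. measure (Prb M j \<omega>) (ext_c (corr M) (tr_in j \<psi>) \<inter> space (Prb M j \<omega>)) = 1}"
    by (auto simp: ext_c_bigconj ext_c_Bel corr_def)
  then have "ext_c (corr M) ?E\<^sub>c \<inter> Omega M = E \<inter> Omega M"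
    by (auto simp: E_def eb1_in_def inter_space_Prb_cong[OF M _ IH])
  then have "(EB M G ^^ k) (ext_c (corr M) ?E\<^sub>c) \<inter> Omega M = (EB M G ^^ k) E \<inter> Omega M" for k
    by (intro eb1_funpow_inter_cong) (auto dest: space_Prb_subset_Omega[OF M])
  then have "\<omega> \<in> ext_c (corr M) (tr_in i (CB G \<psi>)) \<longleftrightarrow> (\<forall>k\<ge>1. \<omega> \<in> (EB M G ^^ k) E)"
    if "\<omega> \<in> Omega M" for \<omega>
    using that by (auto simp: corr_def)
  then show ?case using ext_in_CB_iff[OF M] unfolding E_def by blast
qed (auto simp: corr_def)

theorem theorem2:
  fixes M :: "('w, 'ag::{finite,linorder}, 'p) eps"
    and \<phi> :: "('p, 'ag) fm" and \<omega> :: 'w and i :: 'ag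
  assumes "epistemic_prob_structure M"
    and "wf_fm \<phi>"
    and "\<omega> \<in> Omega M"
  shows "(sat_in M \<omega> i \<phi> \<longleftrightarrow> sat_c (corr M) \<omega> (tr_in i \<phi>)) \<and>
         (sat_out M \<omega> i \<phi> \<longleftrightarrow> sat_c (corr M) \<omega> (tr_out i \<phi>))"
  using ext_in_inter_Omega_eq_ext_c_tr_in[OF assms(1,2), of i] assms(3)
    ext_out_eq_ext_c_tr_out[of M i \<phi>]
  unfolding sat_in_def sat_c_def sat_out_def by blast

end
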